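(* Let $n_0$ be a nonnegative bounded measurable function on $(0,\infty)$ with $\lim_{x\to\infty}x^2n_0(x)=0$, and let $n$ be the global solution of the Kompaneets problem with initial data $n_0$. If $n_0$ is not identically $0$, then $n_t(x)>0$ for every $x>0$, $t>0$.
   Context: The Kompaneets problem: for $x>0$, $t>0$, $\partial_t n = \partial_x J$ with $J(x,n) = x^2\partial_x n + (x^2-2x)n + n^2$, together with $\lim_{x\to\infty} J(x,n_t)=0$; no boundary condition at $x=0$. $n_t(x)=n(x,t)$; the global solution is the unique nonnegative solution in $C([0,\infty);L^1)\cap L^\infty_{loc}([0,\infty);L^\infty)\cap C^{2,1}((0,\infty)^2)$. *)

theory Defs
  imports "HOL-Analysis.Analysis"
begin

text \<open>Kompaneets flux J(x,n) = x^2 n_x + (x^2 - 2x) n + n^2, written in terms of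
  the value v = n(x,t) and the space derivative d = n_x(x,t).\<close>
definition kflux :: "real \<Rightarrow> real \<Rightarrow> real \<Rightarrow> real" where
  "kflux x v d = x\<^sup>2 * d + (x\<^sup>2 - 2 * x) * v + v\<^sup>2"

text \<open>n :: real => real => real, n x t = n_t(x).\<close>
definition kompaneets_solution :: "(real \<Rightarrow> real) \<Rightarrow> (real \<Rightarrow> real \<Rightarrow> real) \<Rightarrow> bool" where
  "kompaneets_solution n0 n \<longleftrightarrow>
     \<comment> \<open>nonnegativity\<close>
     (\<forall>x>0. \<forall>t>0. n x t \<ge> 0) \<and>
     \<comment> \<open>initial datum\<close>
     (AE x in lborel. x > 0 \<longrightarrow> n x 0 = n0 x) \<and>
     \<comment> \<open>C([0,oo); L^1)\<close>
     (\<forall>t\<ge>0. set_integrable lborel {0<..} (\<lambda>x. n x t)) \<and>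
     (\<forall>t\<ge>0. ((\<lambda>s. LINT x:{0<..}|lborel. \<bar>n x s - n x t\<bar>) \<longlongrightarrow> 0) (at t within {0..})) \<and>
     \<comment> \<open>L^oo_loc([0,oo); L^oo)\<close>
     (\<forall>T\<ge>0. \<exists>M. \<forall>t\<in>{0..T}. AE x in lborel. x > 0 \<longrightarrow> \<bar>n x t\<bar> \<le> M) \<and>
     \<comment> \<open>C^{2,1}((0,oo)^2) and the equation d_t n = d_x J\<close>
     (\<exists>nx nxx nt.
        continuous_on ({0<..} \<times> {0<..}) (\<lambda>(x,t). n x t) \<and>
        continuous_on ({0<..} \<times> {0<..}) (\<lambda>(x,t). nx x t) \<and>
        continuous_on ({0<..} \<times> {0<..}) (\<lambda>(x,t). nxx x t) \<and>
        continuous_on ({0<..} \<times> {0<..}) (\<lambda>(x,t). nt x t) \<and>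
        (\<forall>x>0. \<forall>t>0.
           ((\<lambda>y. n y t) has_real_derivative nx x t) (at x) \<and>
           ((\<lambda>y. nx y t) has_real_derivative nxx x t) (at x) \<and>
           ((\<lambda>s. n x s) has_real_derivative nt x t) (at t) \<and>
           ((\<lambda>y. kflux y (n y t) (nx y t)) has_real_derivative nt x t) (at x)) \<and>
        \<comment> \<open>no-flux condition at infinity\<close>
        (\<forall>t>0. ((\<lambda>x. kflux x (n x t) (nx x t)) \<longlongrightarrow> 0) at_top))"

end

theory Submission
  imports Defs
begin

(*
  Positivity first appears somewhere: if n vanished on (0,T) \<times> (0,\<infinity>), continuity in L\<^sup>1
  at t = 0 would force n\<^sub>0 = 0 almost everywhere. It then spreads by a comparison argument
  for the nondivergence form n\<^sub>t = x\<^sup>2 n\<^sub>x\<^sub>x + (x\<^sup>2 + 2n) n\<^sub>x + (2x - 2) n of the equation, in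
  which n enters only through a drift coefficient that is bounded on compact sets. Given
  n(x\<^sub>1, s) > 0, slide the bump w(x, t) = \<epsilon> exp(-(K + 2)(t - s)) (r\<^sup>2 - (x - \<xi>(t))\<^sup>2)\<^sup>2 along
  the segment \<xi> from (x\<^sub>1, s) to (x\<^sub>0, T). For large K it is a subsolution in the tube
  |x - \<xi>(t)| \<le> r; it lies below n at time s and vanishes on the lateral boundary, so the
  minimum principle applied to exp(-\<mu> t) (n - w) gives n(x\<^sub>0, T) \<ge> w(x\<^sub>0, T) > 0.
*)

lemma DERIV_local_min_second_order:
  fixes f f' :: "real \<Rightarrow> real"
  assumes "d > 0"
    and min: "\<And>y. \<bar>y - x\<bar> < d \<Longrightarrow> f x \<le> f y"
    and f': "\<And>y. \<bar>y - x\<bar> < d \<Longrightarrow> (f has_real_derivative f' y) (at y)"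
    and f'': "(f' has_real_derivative f'') (at x)"
  shows "f' x = 0" and "f'' \<ge> 0"
proof -
  show f'_0: "f' x = 0"
    using DERIV_local_min[OF f' \<open>d > 0\<close>] min \<open>d > 0\<close> by (simp add: abs_minus_commute)
  show "f'' \<ge> 0"
  proof (rule ccontr)
    assume "\<not> f'' \<ge> 0"
    then obtain e where "e > 0" and dec: "\<And>h. 0 < h \<Longrightarrow> h < e \<Longrightarrow> f' (x + h) < f' x"
      using DERIV_neg_dec_right[OF f''] by (metis not_le)
    define h where "h = min e d / 2"
    have h: "0 < h" "h < e" "h < d"
      using \<open>e > 0\<close> \<open>d > 0\<close> by (auto simp: h_def)
    obtain z where z: "x < z" "z < x + h" "f (x + h) - f x = h * f' z"
      using MVT2[of x "x + h" f f'] h f' by auto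
    have "f' z < 0"
      using dec[of "z - x"] z h f'_0 by auto
    then have "f (x + h) < f x"
      using z(3) mult_pos_neg[OF h(1), of "f' z"] by linarith
    with min[of "x + h"] h show False by simp
  qed
qed

lemma DERIV_left_local_min_nonpos:
  fixes f :: "real \<Rightarrow> real"
  assumes "(f has_real_derivative l) (at t)" and "d > 0"
    and min: "\<And>\<tau>. t - d < \<tau> \<Longrightarrow> \<tau> \<le> t \<Longrightarrow> f t \<le> f \<tau>"
  shows "l \<le> 0"
proof (rule ccontr)
  assume "\<not> l \<le> 0"
  then obtain e where "e > 0" and inc: "\<And>h. 0 < h \<Longrightarrow> h < e \<Longrightarrow> f (t - h) < f t"
    using DERIV_pos_inc_left[OF assms(1)] by (metis not_le)
  define h where "h = min e d / 2"
  have "0 < h" "h < e" "h < d"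
    using \<open>e > 0\<close> \<open>d > 0\<close> by (auto simp: h_def)
  with inc[of h] min[of "t - h"] show False by simp
qed

lemma isCont_gt_on_closed_interval:
  fixes f :: "real \<Rightarrow> real"
  assumes "isCont f x" and "c < f x"
  obtains r where "0 < r" and "\<And>y. \<bar>y - x\<bar> \<le> r \<Longrightarrow> c < f y"
proof -
  have "(\<lambda>y. f y - c) \<midarrow>x\<rightarrow> f x - c"
    using assms(1) by (simp add: isCont_def tendsto_diff)
  moreover have "0 < f x - c"
    using assms(2) by simp
  ultimately obtain e where "0 < e" and e: "\<forall>y. y \<noteq> x \<and> \<bar>x - y\<bar> < e \<longrightarrow> 0 < f y - c"
    by (blast dest: LIM_fun_gt_zero)
  show thesis
  proof (rule that[of "e / 2"])
    show "c < f y" if "\<bar>y - x\<bar> \<le> e / 2" for y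
      using e[rule_format, of y] that \<open>0 < e\<close> assms(2) by (cases "y = x") (auto simp: abs_minus_commute)
  qed (use \<open>0 < e\<close> in simp)
qed

lemma supersolution_nonneg_at_backward_min:
  fixes f :: "real \<Rightarrow> real \<Rightarrow> real" and fx :: "real \<Rightarrow> real"
  assumes "d > 0" and "0 \<le> a" and "c < \<mu>"
    and min: "\<And>y \<tau>. \<bar>y - x\<bar> < d \<Longrightarrow> t - d < \<tau> \<Longrightarrow> \<tau> \<le> t \<Longrightarrow>
                exp (-\<mu> * t) * f x t \<le> exp (-\<mu> * \<tau>) * f y \<tau>"
    and f_x: "\<And>y. \<bar>y - x\<bar> < d \<Longrightarrow> ((\<lambda>y. f y t) has_real_derivative fx y) (at y)"
    and f_xx: "(fx has_real_derivative fxx) (at x)"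
    and f_t: "((\<lambda>\<tau>. f x \<tau>) has_real_derivative ft) (at t)"
    and super: "a * fxx + b * fx x + c * f x t \<le> ft"
  shows "0 \<le> f x t"
proof (rule ccontr)
  assume neg: "\<not> 0 \<le> f x t"
  have space_min: "f x t \<le> f y t" if "\<bar>y - x\<bar> < d" for y
    using min[OF that, of t] \<open>d > 0\<close> by simp
  have "fx x = 0" and "0 \<le> fxx"
    using DERIV_local_min_second_order[OF \<open>d > 0\<close> space_min f_x f_xx] by auto
  have "((\<lambda>\<tau>. exp (-\<mu> * \<tau>) * f x \<tau>) has_real_derivative exp (-\<mu> * t) * (ft - \<mu> * f x t)) (at t)"
    by (rule derivative_eq_intros f_t refl)+ (simp add: algebra_simps)
  then have "exp (-\<mu> * t) * (ft - \<mu> * f x t) \<le> 0"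
    by (rule DERIV_left_local_min_nonpos[OF _ \<open>d > 0\<close>]) (use min[of x] \<open>d > 0\<close> in simp)
  then have "ft \<le> \<mu> * f x t"
    by (simp add: mult_le_0_iff)
  moreover have "c * f x t \<le> ft"
    using super \<open>fx x = 0\<close> mult_nonneg_nonneg[OF \<open>0 \<le> a\<close> \<open>0 \<le> fxx\<close>] by simp
  moreover have "\<mu> * f x t < c * f x t"
    using neg \<open>c < \<mu>\<close> by (simp add: mult_strict_right_mono_neg)
  ultimately show False
    by linarith
qed

definition tube :: "(real \<Rightarrow> real) \<Rightarrow> real \<Rightarrow> real \<Rightarrow> real \<Rightarrow> (real \<times> real) set" where
  "tube \<xi> r s T = {(x, t). s \<le> t \<and> t \<le> T \<and> \<bar>x - \<xi> t\<bar> \<le> r}"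

lemma compact_tube:
  assumes "continuous_on {s..T} \<xi>"
  shows "compact (tube \<xi> r s T)"
proof -
  have "tube \<xi> r s T = (\<lambda>(y, t). (y + \<xi> t, t)) ` ({-r..r} \<times> {s..T})"
  proof (intro set_eqI iffI)
    fix z assume "z \<in> tube \<xi> r s T"
    then show "z \<in> (\<lambda>(y, t). (y + \<xi> t, t)) ` ({-r..r} \<times> {s..T})"
      by (intro image_eqI[of _ _ "(fst z - \<xi> (snd z), snd z)"]) (auto simp: tube_def abs_le_iff)
  qed (auto simp: tube_def)
  moreover have "continuous_on ({-r..r} \<times> {s..T}) (\<lambda>(y, t). (y + \<xi> t, t))"
    by (auto simp: case_prod_beta intro!: continuous_intros continuous_on_compose2[OF assms])
  ultimately show ?thesis
    by (simp add: compact_continuous_image compact_Times)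
qed

lemma tube_backward_neighbourhood:
  assumes lip: "\<And>t \<tau>. \<bar>\<xi> t - \<xi> \<tau>\<bar> \<le> L * \<bar>t - \<tau>\<bar>"
    and "(x, t) \<in> tube \<xi> r s T" and "s < t" and "\<bar>x - \<xi> t\<bar> < r"
  obtains d where "d > 0"
    and "\<And>y \<tau>. \<bar>y - x\<bar> < d \<Longrightarrow> t - d < \<tau> \<Longrightarrow> \<tau> \<le> t \<Longrightarrow> (y, \<tau>) \<in> tube \<xi> r s T"
proof
  define d where "d = min (t - s) ((r - \<bar>x - \<xi> t\<bar>) / (\<bar>L\<bar> + 1))"
  show "d > 0"
    using assms by (simp add: d_def add_pos_nonneg)
  fix y \<tau> assume y: "\<bar>y - x\<bar> < d" and \<tau>: "t - d < \<tau>" "\<tau> \<le> t"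
  have "\<bar>\<xi> t - \<xi> \<tau>\<bar> \<le> \<bar>L\<bar> * \<bar>t - \<tau>\<bar>"
    using lip[of t \<tau>] abs_ge_self[of L] by (smt (verit) mult_right_mono abs_ge_zero)
  also have "\<dots> \<le> \<bar>L\<bar> * d"
    using \<tau> by (intro mult_left_mono) auto
  finally have "\<bar>y - \<xi> \<tau>\<bar> \<le> d + \<bar>x - \<xi> t\<bar> + \<bar>L\<bar> * d"
    using y by linarith
  also have "\<dots> \<le> r"
  proof -
    have "d \<le> (r - \<bar>x - \<xi> t\<bar>) / (\<bar>L\<bar> + 1)"
      by (simp add: d_def)
    then have "d * (\<bar>L\<bar> + 1) \<le> r - \<bar>x - \<xi> t\<bar>"
      by (simp add: pos_le_divide_eq add_pos_nonneg)
    then show ?thesis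
      by (simp add: algebra_simps)
  qed
  finally show "(y, \<tau>) \<in> tube \<xi> r s T"
    using assms \<tau> by (simp add: tube_def d_def)
qed

lemma tube_minimum_principle:
  fixes f fx fxx ft a b c :: "real \<Rightarrow> real \<Rightarrow> real" and \<xi> :: "real \<Rightarrow> real" and r s T :: real
  defines "D \<equiv> tube \<xi> r s T"
  assumes "compact D"
    and lip: "\<And>t \<tau>. \<bar>\<xi> t - \<xi> \<tau>\<bar> \<le> L * \<bar>t - \<tau>\<bar>"
    and cont: "continuous_on D (\<lambda>(x, t). f x t)"
    and f_x: "\<And>x t. (x, t) \<in> D \<Longrightarrow> ((\<lambda>y. f y t) has_real_derivative fx x t) (at x)"
    and f_xx: "\<And>x t. (x, t) \<in> D \<Longrightarrow> ((\<lambda>y. fx y t) has_real_derivative fxx x t) (at x)"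
    and f_t: "\<And>x t. (x, t) \<in> D \<Longrightarrow> ((\<lambda>\<tau>. f x \<tau>) has_real_derivative ft x t) (at t)"
    and super: "\<And>x t. (x, t) \<in> D \<Longrightarrow> a x t * fxx x t + b x t * fx x t + c x t * f x t \<le> ft x t"
    and elliptic: "\<And>x t. (x, t) \<in> D \<Longrightarrow> 0 \<le> a x t"
    and c_bound: "\<And>x t. (x, t) \<in> D \<Longrightarrow> c x t \<le> C"
    and bottom: "\<And>x. \<bar>x - \<xi> s\<bar> \<le> r \<Longrightarrow> 0 \<le> f x s"
    and lateral: "\<And>x t. s \<le> t \<Longrightarrow> t \<le> T \<Longrightarrow> \<bar>x - \<xi> t\<bar> = r \<Longrightarrow> 0 \<le> f x t"
    and "(x, t) \<in> D"
  shows "0 \<le> f x t"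
proof -
  define \<mu> where "\<mu> = C + 1"
  define F where "F = (\<lambda>(x, t). exp (-\<mu> * t) * f x t)"
  have "continuous_on D F"
    unfolding F_def using cont by (auto simp: case_prod_beta intro!: continuous_intros)
  then obtain xm tm where m: "(xm, tm) \<in> D" and min: "\<And>z. z \<in> D \<Longrightarrow> F (xm, tm) \<le> F z"
    using continuous_attains_inf[OF \<open>compact D\<close>] \<open>(x, t) \<in> D\<close> by (metis empty_iff surj_pair)
  have "0 \<le> f xm tm"
  proof -
    from m have "s \<le> tm" "\<bar>xm - \<xi> tm\<bar> \<le> r"
      by (auto simp: D_def tube_def)
    then consider "tm = s" | "\<bar>xm - \<xi> tm\<bar> = r" | "s < tm" "\<bar>xm - \<xi> tm\<bar> < r"
      by linarith
    then show ?thesis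
    proof cases
      case 1
      then show ?thesis using bottom m by (simp add: D_def tube_def)
    next
      case 2
      then show ?thesis using lateral m by (simp add: D_def tube_def)
    next
      case 3
      obtain d where "d > 0"
        and nbhd: "\<And>y \<tau>. \<bar>y - xm\<bar> < d \<Longrightarrow> tm - d < \<tau> \<Longrightarrow> \<tau> \<le> tm \<Longrightarrow> (y, \<tau>) \<in> D"
        using tube_backward_neighbourhood[OF lip m[unfolded D_def] 3] unfolding D_def by blast
      show ?thesis
      proof (rule supersolution_nonneg_at_backward_min[OF \<open>d > 0\<close> elliptic[OF m],
          where f = f and fx = "\<lambda>y. fx y tm" and fxx = "fxx xm tm" and ft = "ft xm tm" and b = "b xm tm"])
        show "c xm tm < \<mu>"
          using c_bound[OF m] by (simp add: \<mu>_def)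
        show "exp (-\<mu> * tm) * f xm tm \<le> exp (-\<mu> * \<tau>) * f y \<tau>"
          if "\<bar>y - xm\<bar> < d" "tm - d < \<tau>" "\<tau> \<le> tm" for y \<tau>
          using min[OF nbhd[OF that]] by (simp add: F_def)
        show "((\<lambda>y. f y tm) has_real_derivative fx y tm) (at y)" if "\<bar>y - xm\<bar> < d" for y
          using f_x nbhd[OF that, of tm] \<open>d > 0\<close> by simp
      qed (use m f_xx f_t super in auto)
    qed
  qed
  then have "0 \<le> F (xm, tm)"
    by (simp add: F_def)
  also have "\<dots> \<le> F (x, t)"
    using min \<open>(x, t) \<in> D\<close> .
  finally show ?thesis
    by (simp add: F_def zero_le_mult_iff)
qed

lemma bump_profile_elliptic_bound:
  fixes r A0 A1 B :: real
  assumes "0 < r" and "0 < A0"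
  obtains K where "\<And>a b y. A0 \<le> a \<Longrightarrow> a \<le> A1 \<Longrightarrow> \<bar>b\<bar> \<le> B \<Longrightarrow> \<bar>y\<bar> \<le> r \<Longrightarrow>
    0 \<le> a * (8 * y\<^sup>2 - 4 * (r\<^sup>2 - y\<^sup>2)) - 4 * b * y * (r\<^sup>2 - y\<^sup>2) + K * (r\<^sup>2 - y\<^sup>2)\<^sup>2"
proof -
  (* Where u = r\<^sup>2 - y\<^sup>2 is small, the term 8 a y\<^sup>2 dominates; elsewhere K u\<^sup>2 does. *)
  define Q where "Q = 4 * \<bar>A1\<bar> + 4 * r * \<bar>B\<bar> + 1"
  define u0 where "u0 = min (4 * A0 * r\<^sup>2 / Q) (r\<^sup>2 / 2)"
  have "0 < Q"
    using \<open>0 < r\<close> by (simp add: Q_def add_nonneg_pos)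
  then have "0 < u0"
    using assms by (simp add: u0_def)
  show thesis
  proof (rule that[of "Q / u0"])
    fix a b y assume a: "A0 \<le> a" "a \<le> A1" and "\<bar>b\<bar> \<le> B" and "\<bar>y\<bar> \<le> r"
    define u where "u = r\<^sup>2 - y\<^sup>2"
    have "y\<^sup>2 \<le> r\<^sup>2"
      using \<open>\<bar>y\<bar> \<le> r\<close> by (metis abs_ge_zero power2_abs power_mono)
    then have "0 \<le> u"
      by (simp add: u_def)
    have "b * y \<le> \<bar>b\<bar> * \<bar>y\<bar>"
      by (metis abs_ge_self abs_mult)
    also have "\<dots> \<le> \<bar>B\<bar> * r"
      using \<open>\<bar>b\<bar> \<le> B\<close> \<open>\<bar>y\<bar> \<le> r\<close> by (intro mult_mono) auto
    finally have "b * y * u \<le> \<bar>B\<bar> * r * u"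
      using \<open>0 \<le> u\<close> by (rule mult_right_mono)
    moreover have "4 * a * u \<le> 4 * \<bar>A1\<bar> * u"
      using a \<open>0 \<le> u\<close> by (simp add: mult_right_mono)
    ultimately have drift: "4 * a * u + 4 * b * y * u \<le> Q * u"
      using \<open>0 \<le> u\<close> by (simp add: Q_def algebra_simps)
    have "Q * u \<le> 8 * a * y\<^sup>2 + Q / u0 * u\<^sup>2"
    proof (cases "u \<le> u0")
      case True
      then have "Q * u \<le> 4 * A0 * r\<^sup>2"
        using \<open>0 < Q\<close> by (simp add: u0_def pos_le_divide_eq mult.commute)
      also have "\<dots> \<le> 8 * A0 * y\<^sup>2"
        using True \<open>0 < A0\<close> by (simp add: u0_def u_def)
      also have "\<dots> \<le> 8 * a * y\<^sup>2"
        using a by (simp add: mult_right_mono)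
      finally show ?thesis
        using \<open>0 < Q\<close> \<open>0 < u0\<close> by (simp add: add_increasing2)
    next
      case False
      then have "Q * u * 1 \<le> Q * u * (u / u0)"
        using \<open>0 < Q\<close> \<open>0 < u0\<close> \<open>0 \<le> u\<close> by (intro mult_left_mono) auto
      moreover have "0 \<le> 8 * a * y\<^sup>2"
        using a \<open>0 < A0\<close> by simp
      ultimately show ?thesis
        by (simp add: power2_eq_square)
    qed
    then show "0 \<le> a * (8 * y\<^sup>2 - 4 * (r\<^sup>2 - y\<^sup>2)) - 4 * b * y * (r\<^sup>2 - y\<^sup>2) + Q / u0 * (r\<^sup>2 - y\<^sup>2)\<^sup>2"
      using drift unfolding u_def by (simp add: algebra_simps)
  qed
qed

lemma bump_profile_le:
  fixes r y :: real
  assumes "\<bar>y\<bar> \<le> r"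
  shows "(r\<^sup>2 - y\<^sup>2)\<^sup>2 \<le> r ^ 4"
proof -
  have "y\<^sup>2 \<le> r\<^sup>2"
    using assms by (metis abs_ge_zero power2_abs power_mono)
  then have "(r\<^sup>2 - y\<^sup>2)\<^sup>2 \<le> (r\<^sup>2)\<^sup>2"
    by (intro power_mono) auto
  then show ?thesis
    by simp
qed

lemma bump_derivatives:
  fixes \<epsilon> k s c v r :: real
  defines "E \<equiv> \<lambda>t. \<epsilon> * exp (-k * (t - s))" and "y \<equiv> \<lambda>x t. x - (c + v * (t - s))"
  shows "((\<lambda>x. E t * (r\<^sup>2 - (y x t)\<^sup>2)\<^sup>2) has_real_derivative
           -4 * E t * y x t * (r\<^sup>2 - (y x t)\<^sup>2)) (at x)"
    and "((\<lambda>x. -4 * E t * y x t * (r\<^sup>2 - (y x t)\<^sup>2)) has_real_derivative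
           E t * (8 * (y x t)\<^sup>2 - 4 * (r\<^sup>2 - (y x t)\<^sup>2))) (at x)"
    and "((\<lambda>t. E t * (r\<^sup>2 - (y x t)\<^sup>2)\<^sup>2) has_real_derivative
           E t * (4 * v * y x t * (r\<^sup>2 - (y x t)\<^sup>2) - k * (r\<^sup>2 - (y x t)\<^sup>2)\<^sup>2)) (at t)"
  unfolding E_def y_def
  subgoal by (rule derivative_eq_intros refl)+ (simp add: algebra_simps power2_eq_square)
  subgoal by (rule derivative_eq_intros refl)+ (simp add: algebra_simps power2_eq_square)
  subgoal by (rule derivative_eq_intros refl)+ (simp add: algebra_simps power2_eq_square)
  done

lemma bump_subsolution:
  fixes E x y u :: real
  assumes "0 \<le> E" and "0 \<le> x"
    and "0 \<le> x\<^sup>2 * (8 * y\<^sup>2 - 4 * u) - 4 * (b + v) * y * u + K * u\<^sup>2"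
  shows "E * (4 * v * y * u - (K + 2) * u\<^sup>2)
           \<le> x\<^sup>2 * (E * (8 * y\<^sup>2 - 4 * u)) + b * (-4 * E * y * u) + (2 * x - 2) * (E * u\<^sup>2)"
proof -
  have "0 \<le> E * (x\<^sup>2 * (8 * y\<^sup>2 - 4 * u) - 4 * (b + v) * y * u + K * u\<^sup>2) + 2 * x * (E * u\<^sup>2)"
    using assms by simp
  then show ?thesis
    by (simp add: algebra_simps)
qed

lemma linear_interpolation_between:
  fixes a b s t T :: real
  assumes "s < T" "s \<le> t" "t \<le> T"
  shows "min a b \<le> a + (b - a) / (T - s) * (t - s) \<and> a + (b - a) / (T - s) * (t - s) \<le> max a b"
proof -
  define \<theta> where "\<theta> = (t - s) / (T - s)"
  have "0 \<le> \<theta>" "\<theta> \<le> 1"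
    using assms by (auto simp: \<theta>_def)
  moreover have "a + (b - a) / (T - s) * (t - s) = a + (b - a) * \<theta>"
    by (simp add: \<theta>_def)
  moreover have "(1 - \<theta>) * a + \<theta> * b \<le> max a b"
    by (rule convex_bound_le) (use \<open>0 \<le> \<theta>\<close> \<open>\<theta> \<le> 1\<close> in auto)
  moreover have "(1 - \<theta>) * (- a) + \<theta> * (- b) \<le> - min a b"
    by (rule convex_bound_le) (use \<open>0 \<le> \<theta>\<close> \<open>\<theta> \<le> 1\<close> in auto)
  ultimately show ?thesis
    by (simp add: algebra_simps)
qed

lemma kflux_has_real_derivative:
  assumes "(u has_real_derivative u' x) (at x)" and "(u' has_real_derivative u'') (at x)"
  shows "((\<lambda>y. kflux y (u y) (u' y)) has_real_derivative
           x\<^sup>2 * u'' + (x\<^sup>2 + 2 * u x) * u' x + (2 * x - 2) * u x) (at x)"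
  unfolding kflux_def
  by (rule derivative_eq_intros assms refl)+ (simp add: algebra_simps power2_eq_square)

lemma initial_value_zero_if_vanishing:
  fixes n :: "real \<Rightarrow> real \<Rightarrow> real"
  assumes integrable: "set_integrable lborel {0<..} (\<lambda>x. n x 0)"
    and L1_cont: "((\<lambda>s. LINT x:{0<..}|lborel. \<bar>n x s - n x 0\<bar>) \<longlongrightarrow> 0) (at 0 within {0..})"
    and "0 < T" and vanish: "\<And>s x. 0 < s \<Longrightarrow> s < T \<Longrightarrow> 0 < x \<Longrightarrow> n x s = 0"
  shows "AE x in lborel. 0 < x \<longrightarrow> n x 0 = 0"
proof -
  define I where "I = (LINT x:{0<..}|lborel. \<bar>n x 0\<bar>)"
  have "\<forall>\<^sub>F s in at_right 0. (LINT x:{0<..}|lborel. \<bar>n x s - n x 0\<bar>) = I"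
    using eventually_at_right_real[OF \<open>0 < T\<close>]
  proof eventually_elim
    case (elim s)
    then show ?case
      unfolding I_def by (intro set_lebesgue_integral_cong) (auto simp: vanish)
  qed
  moreover have "((\<lambda>s. LINT x:{0<..}|lborel. \<bar>n x s - n x 0\<bar>) \<longlongrightarrow> 0) (at_right 0)"
    using L1_cont by (simp add: at_within_Ici_at_right)
  ultimately have "((\<lambda>s. I) \<longlongrightarrow> 0) (at_right (0::real))"
    using tendsto_cong by fastforce
  then have "I = 0"
    by (simp add: tendsto_const_iff)
  moreover have "integrable lborel (\<lambda>x. indicator {0<..} x *\<^sub>R \<bar>n x 0\<bar>)"
    using set_integrable_abs[OF integrable] by (simp add: set_integrable_def)
  ultimately have "AE x in lborel. indicator {0<..} x *\<^sub>R \<bar>n x 0\<bar> = 0"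
    by (subst integral_nonneg_eq_0_iff_AE[symmetric]) (auto simp: I_def set_lebesgue_integral_def)
  then show ?thesis
    by eventually_elim (auto simp: indicator_def)
qed

locale kompaneets_classical =
  fixes n nx nxx nt :: "real \<Rightarrow> real \<Rightarrow> real"
  assumes cont: "continuous_on ({0<..} \<times> {0<..}) (\<lambda>(x, t). n x t)"
    and n_x: "\<And>x t. 0 < x \<Longrightarrow> 0 < t \<Longrightarrow> ((\<lambda>y. n y t) has_real_derivative nx x t) (at x)"
    and n_xx: "\<And>x t. 0 < x \<Longrightarrow> 0 < t \<Longrightarrow> ((\<lambda>y. nx y t) has_real_derivative nxx x t) (at x)"
    and n_t: "\<And>x t. 0 < x \<Longrightarrow> 0 < t \<Longrightarrow> ((\<lambda>\<tau>. n x \<tau>) has_real_derivative nt x t) (at t)"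
    and pde: "\<And>x t. 0 < x \<Longrightarrow> 0 < t \<Longrightarrow>
                nt x t = x\<^sup>2 * nxx x t + (x\<^sup>2 + 2 * n x t) * nx x t + (2 * x - 2) * n x t"
    and nonneg: "\<And>x t. 0 < x \<Longrightarrow> 0 < t \<Longrightarrow> 0 \<le> n x t"
begin

(* The extra 2 in the decay rate absorbs the zeroth-order coefficient 2x - 2 \<ge> -2. *)

lemma bump_below_solution:
  fixes \<epsilon> K v r c s T :: real and \<xi> :: "real \<Rightarrow> real"
  defines "\<xi> \<equiv> \<lambda>t. c + v * (t - s)"
    and "w \<equiv> \<lambda>x t. \<epsilon> * exp (-(K + 2) * (t - s)) * (r\<^sup>2 - (x - \<xi> t)\<^sup>2)\<^sup>2"
  assumes "0 \<le> \<epsilon>"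
    and D_pos: "tube \<xi> r s T \<subseteq> {0<..} \<times> {0<..}"
    and x_bound: "\<And>x t. (x, t) \<in> tube \<xi> r s T \<Longrightarrow> x \<le> X"
    and K: "\<And>x t. (x, t) \<in> tube \<xi> r s T \<Longrightarrow>
              0 \<le> x\<^sup>2 * (8 * (x - \<xi> t)\<^sup>2 - 4 * (r\<^sup>2 - (x - \<xi> t)\<^sup>2))
                   - 4 * (x\<^sup>2 + 2 * n x t + v) * (x - \<xi> t) * (r\<^sup>2 - (x - \<xi> t)\<^sup>2)
                   + K * (r\<^sup>2 - (x - \<xi> t)\<^sup>2)\<^sup>2"
    and init: "\<And>x. \<bar>x - c\<bar> \<le> r \<Longrightarrow> \<epsilon> * r ^ 4 \<le> n x s"
    and "(x, t) \<in> tube \<xi> r s T"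
  shows "w x t \<le> n x t"
proof -
  define D where "D = tube \<xi> r s T"
  define E where "E t = \<epsilon> * exp (-(K + 2) * (t - s))" for t
  define wx where "wx x t = -4 * E t * (x - \<xi> t) * (r\<^sup>2 - (x - \<xi> t)\<^sup>2)" for x t
  define wxx where "wxx x t = E t * (8 * (x - \<xi> t)\<^sup>2 - 4 * (r\<^sup>2 - (x - \<xi> t)\<^sup>2))" for x t
  define wt where "wt x t = E t * (4 * v * (x - \<xi> t) * (r\<^sup>2 - (x - \<xi> t)\<^sup>2)
                                    - (K + 2) * (r\<^sup>2 - (x - \<xi> t)\<^sup>2)\<^sup>2)" for x t
  have w_x: "((\<lambda>y. w y t) has_real_derivative wx x t) (at x)"
    and w_xx: "((\<lambda>y. wx y t) has_real_derivative wxx x t) (at x)"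
    and w_t: "((\<lambda>\<tau>. w x \<tau>) has_real_derivative wt x t) (at t)" for x t
    unfolding w_def wx_def wxx_def wt_def E_def \<xi>_def by (rule bump_derivatives)+
  have "0 \<le> E t" for t
    using \<open>0 \<le> \<epsilon>\<close> by (simp add: E_def)
  have D_iff: "(x, t) \<in> D \<longleftrightarrow> s \<le> t \<and> t \<le> T \<and> \<bar>x - \<xi> t\<bar> \<le> r" for x t
    by (simp add: D_def tube_def)
  have "0 \<le> n x t - w x t"
  proof (rule tube_minimum_principle[where \<xi> = \<xi> and r = r and s = s and T = T and L = "\<bar>v\<bar>"
        and f = "\<lambda>x t. n x t - w x t" and fx = "\<lambda>x t. nx x t - wx x t"
        and fxx = "\<lambda>x t. nxx x t - wxx x t" and ft = "\<lambda>x t. nt x t - wt x t"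
        and a = "\<lambda>x t. x\<^sup>2" and b = "\<lambda>x t. x\<^sup>2 + 2 * n x t" and c = "\<lambda>x t. 2 * x - 2"
        and C = "2 * X", folded D_def])
    show "compact D"
      unfolding D_def \<xi>_def by (intro compact_tube continuous_intros)
    show "\<bar>\<xi> t - \<xi> \<tau>\<bar> \<le> \<bar>v\<bar> * \<bar>t - \<tau>\<bar>" for t \<tau>
      by (simp add: \<xi>_def abs_mult[symmetric] algebra_simps)
    show "continuous_on D (\<lambda>(x, t). n x t - w x t)"
      using continuous_on_subset[OF cont D_pos[folded D_def]]
      by (auto simp: case_prod_beta w_def \<xi>_def intro!: continuous_intros)
    show "((\<lambda>y. n y t - w y t) has_real_derivative nx x t - wx x t) (at x)"
      and "((\<lambda>y. nx y t - wx y t) has_real_derivative nxx x t - wxx x t) (at x)"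
      and "((\<lambda>\<tau>. n x \<tau> - w x \<tau>) has_real_derivative nt x t - wt x t) (at t)"
      if "(x, t) \<in> D" for x t
      using that D_pos by (auto simp: D_def intro!: DERIV_diff n_x n_xx n_t w_x w_xx w_t)
    show "x\<^sup>2 * (nxx x t - wxx x t) + (x\<^sup>2 + 2 * n x t) * (nx x t - wx x t)
            + (2 * x - 2) * (n x t - w x t) \<le> nt x t - wt x t"
      if "(x, t) \<in> D" for x t
    proof -
      have "0 < x" "0 < t"
        using that D_pos by (auto simp: D_def)
      moreover have "wt x t \<le> x\<^sup>2 * wxx x t + (x\<^sup>2 + 2 * n x t) * wx x t + (2 * x - 2) * w x t"
        unfolding wt_def wxx_def wx_def w_def E_def[symmetric]
        by (rule bump_subsolution) (use \<open>0 \<le> E t\<close> \<open>0 < x\<close> K that in \<open>auto simp: D_def\<close>)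
      ultimately show ?thesis
        using pde[of x t] by (simp add: algebra_simps)
    qed
    show "2 * x - 2 \<le> 2 * X" if "(x, t) \<in> D" for x t
      using x_bound[of x t] that by (simp add: D_def)
    show "0 \<le> n x s - w x s" if "\<bar>x - \<xi> s\<bar> \<le> r" for x
    proof -
      have "w x s \<le> \<epsilon> * r ^ 4"
        using bump_profile_le[OF that] \<open>0 \<le> \<epsilon>\<close> by (simp add: w_def mult_left_mono)
      then show ?thesis
        using init[of x] that by (simp add: \<xi>_def)
    qed
    show "0 \<le> n x t - w x t" if "s \<le> t" "t \<le> T" "\<bar>x - \<xi> t\<bar> = r" for x t
    proof -
      have "w x t = 0"
        using power2_abs[of "x - \<xi> t"] that(3) by (simp add: w_def)
      moreover have "(x, t) \<in> D"
        using that by (simp add: D_iff)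
      ultimately show ?thesis
        using D_pos nonneg[of x t] by (auto simp: D_def)
    qed
  qed (use \<open>(x, t) \<in> tube \<xi> r s T\<close> in \<open>simp_all add: D_def\<close>)
  then show ?thesis
    by simp
qed

lemma positivity_propagates:
  assumes "0 < x0" "0 < x1" "0 < s" "s < T" "0 < n x1 s"
  shows "0 < n x0 T"
proof -
  define p where "p = n x1 s"
  obtain r0 where "0 < r0" and r0: "\<And>y. \<bar>y - x1\<bar> \<le> r0 \<Longrightarrow> p / 2 < n y s"
    using isCont_gt_on_closed_interval[OF DERIV_isCont[OF n_x[OF \<open>0 < x1\<close> \<open>0 < s\<close>]], of "p / 2"]
      \<open>0 < n x1 s\<close> by (auto simp: p_def)
  define r where "r = min r0 (min x0 x1 / 2)"
  have "0 < r" "r \<le> min x0 x1 / 2"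
    using \<open>0 < r0\<close> \<open>0 < x0\<close> \<open>0 < x1\<close> by (auto simp: r_def)
  define v where "v = (x0 - x1) / (T - s)"
  define \<xi> where "\<xi> t = x1 + v * (t - s)" for t
  define D where "D = tube \<xi> r s T"
  define lo hi where "lo = min x0 x1 / 2" and "hi = max x0 x1 + r"
  have "0 < lo"
    using \<open>0 < x0\<close> \<open>0 < x1\<close> by (simp add: lo_def)
  have D_x: "lo \<le> x \<and> x \<le> hi" if "(x, t) \<in> D" for x t
    using that linear_interpolation_between[OF \<open>s < T\<close>, of t x1 x0] \<open>r \<le> min x0 x1 / 2\<close>
    by (auto simp: D_def tube_def \<xi>_def v_def lo_def hi_def abs_le_iff)
  have D_pos: "D \<subseteq> {0<..} \<times> {0<..}"
    using D_x \<open>0 < lo\<close> \<open>0 < s\<close> by (force simp: D_def tube_def)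
  have "compact D"
    unfolding D_def \<xi>_def by (intro compact_tube continuous_intros)
  moreover have "continuous_on D (\<lambda>(x, t). x\<^sup>2 + 2 * n x t + v)"
    using continuous_on_subset[OF cont D_pos] by (auto simp: case_prod_beta intro!: continuous_intros)
  ultimately obtain B where B: "\<And>x t. (x, t) \<in> D \<Longrightarrow> \<bar>x\<^sup>2 + 2 * n x t + v\<bar> \<le> B"
    by (rule continuous_on_compact_bound) auto
  obtain K where K: "\<And>a b y. lo\<^sup>2 \<le> a \<Longrightarrow> a \<le> hi\<^sup>2 \<Longrightarrow> \<bar>b\<bar> \<le> B \<Longrightarrow> \<bar>y\<bar> \<le> r \<Longrightarrow>
      0 \<le> a * (8 * y\<^sup>2 - 4 * (r\<^sup>2 - y\<^sup>2)) - 4 * b * y * (r\<^sup>2 - y\<^sup>2) + K * (r\<^sup>2 - y\<^sup>2)\<^sup>2"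
    using bump_profile_elliptic_bound[OF \<open>0 < r\<close>, of "lo\<^sup>2"] \<open>0 < lo\<close> by auto
  define \<epsilon> where "\<epsilon> = p / (2 * r ^ 4)"
  have "\<epsilon> * exp (-(K + 2) * (T - s)) * (r\<^sup>2 - (x0 - \<xi> T)\<^sup>2)\<^sup>2 \<le> n x0 T"
  proof (rule bump_below_solution[where \<epsilon> = \<epsilon> and K = K and v = v and r = r and c = x1 and s = s
        and T = T and X = hi, folded \<xi>_def D_def])
    show "0 \<le> \<epsilon>"
      using \<open>0 < n x1 s\<close> by (simp add: \<epsilon>_def p_def)
    show "x \<le> hi" if "(x, t) \<in> D" for x t
      using D_x[OF that] by simp
    show "0 \<le> x\<^sup>2 * (8 * (x - \<xi> t)\<^sup>2 - 4 * (r\<^sup>2 - (x - \<xi> t)\<^sup>2))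
            - 4 * (x\<^sup>2 + 2 * n x t + v) * (x - \<xi> t) * (r\<^sup>2 - (x - \<xi> t)\<^sup>2) + K * (r\<^sup>2 - (x - \<xi> t)\<^sup>2)\<^sup>2"
      if "(x, t) \<in> D" for x t
    proof (rule K)
      show "lo\<^sup>2 \<le> x\<^sup>2" "x\<^sup>2 \<le> hi\<^sup>2"
        using D_x[OF that] \<open>0 < lo\<close> by (auto intro!: power_mono)
    qed (use B[OF that] that in \<open>auto simp: D_def tube_def\<close>)
    show "\<epsilon> * r ^ 4 \<le> n x s" if "\<bar>x - x1\<bar> \<le> r" for x
    proof -
      have "p / 2 < n x s"
        using r0 that by (simp add: r_def)
      then show ?thesis
        using \<open>0 < r\<close> by (simp add: \<epsilon>_def)
    qed
    show "(x0, T) \<in> D"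
      using \<open>s < T\<close> \<open>0 < r\<close> by (simp add: D_def tube_def \<xi>_def v_def)
  qed (use D_pos in simp)
  moreover have "0 < \<epsilon> * exp (-(K + 2) * (T - s)) * (r\<^sup>2 - (x0 - \<xi> T)\<^sup>2)\<^sup>2"
    using \<open>0 < n x1 s\<close> \<open>0 < r\<close> \<open>s < T\<close> by (simp add: \<epsilon>_def p_def \<xi>_def v_def)
  ultimately show ?thesis
    by linarith
qed

end

theorem lemma5p1:
  fixes n0 :: "real \<Rightarrow> real" and n :: "real \<Rightarrow> real \<Rightarrow> real"
  assumes n0_nonneg: "\<forall>x>0. n0 x \<ge> 0"
    and n0_bounded: "\<exists>M. \<forall>x>0. \<bar>n0 x\<bar> \<le> M"
    and n0_meas: "set_borel_measurable lborel {0<..} n0"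
    and n0_decay: "((\<lambda>x. x\<^sup>2 * n0 x) \<longlongrightarrow> 0) at_top"
    and sol: "kompaneets_solution n0 n"
    and nonzero: "\<not> (AE x in lborel. x > 0 \<longrightarrow> n0 x = 0)"
  shows "\<forall>x>0. \<forall>t>0. n x t > 0"
proof -
  obtain nx nxx nt where cont: "continuous_on ({0<..} \<times> {0<..}) (\<lambda>(x, t). n x t)"
    and derivs: "\<forall>x>0. \<forall>t>0.
           ((\<lambda>y. n y t) has_real_derivative nx x t) (at x) \<and>
           ((\<lambda>y. nx y t) has_real_derivative nxx x t) (at x) \<and>
           ((\<lambda>s. n x s) has_real_derivative nt x t) (at t) \<and>
           ((\<lambda>y. kflux y (n y t) (nx y t)) has_real_derivative nt x t) (at x)"
    using sol unfolding kompaneets_solution_def by blast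
  have nonneg: "\<forall>x>0. \<forall>t>0. 0 \<le> n x t"
    and init: "AE x in lborel. 0 < x \<longrightarrow> n x 0 = n0 x"
    and integrable: "set_integrable lborel {0<..} (\<lambda>x. n x 0)"
    and L1_cont: "((\<lambda>s. LINT x:{0<..}|lborel. \<bar>n x s - n x 0\<bar>) \<longlongrightarrow> 0) (at 0 within {0..})"
    using sol unfolding kompaneets_solution_def by auto
  have n_x: "((\<lambda>y. n y t) has_real_derivative nx x t) (at x)"
    and n_xx: "((\<lambda>y. nx y t) has_real_derivative nxx x t) (at x)"
    and n_t: "((\<lambda>\<tau>. n x \<tau>) has_real_derivative nt x t) (at t)"
    and flux_x: "((\<lambda>y. kflux y (n y t) (nx y t)) has_real_derivative nt x t) (at x)"
    if "0 < x" "0 < t" for x t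
    using derivs that by auto
  interpret kompaneets_classical n nx nxx nt
  proof
    show "nt x t = x\<^sup>2 * nxx x t + (x\<^sup>2 + 2 * n x t) * nx x t + (2 * x - 2) * n x t"
      if "0 < x" "0 < t" for x t
      using DERIV_unique[OF flux_x kflux_has_real_derivative[OF n_x n_xx]] that by simp
  qed (use cont n_x n_xx n_t nonneg in auto)
  show ?thesis
  proof (intro allI impI)
    fix x0 T :: real
    assume "0 < x0" "0 < T"
    have "\<exists>s x1. 0 < s \<and> s < T \<and> 0 < x1 \<and> 0 < n x1 s"
    proof (rule ccontr)
      assume "\<not> ?thesis"
      then have "n x s = 0" if "0 < s" "s < T" "0 < x" for s x
        using nonneg that by force
      then have "AE x in lborel. 0 < x \<longrightarrow> n x 0 = 0"
        by (rule initial_value_zero_if_vanishing[OF integrable L1_cont \<open>0 < T\<close>])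
      with init have "AE x in lborel. 0 < x \<longrightarrow> n0 x = 0"
        by eventually_elim auto
      with nonzero show False ..
    qed
    then show "0 < n x0 T"
      using positivity_propagates \<open>0 < x0\<close> by blast
  qed
qed

end
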